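(* Let $G$ be a bridgeless cubic graph, let $M_1,M_2,M_3$ be 1-factors of $G$, and let $G_c$ be the $k$-core of $G$ with respect to $M_1,M_2,M_3$, where $k$ is a positive integer. Then $|\overline{M_1}|_{odd}+|\overline{M_2}|_{odd}+|\overline{M_3}|_{odd}\leq 2k$. Moreover, if equality holds, then $G_c$ is a Petersen core.
   Context: Graphs may have multiple edges and loops. A 1-factor is a spanning 1-regular subgraph (identified with its edge set). For 1-factors $M_1,M_2,M_3$ of a cubic graph $G$, let $E_i$ ($i=0,1,2,3$) be the set of edges of $G$ lying in precisely $i$ of $M_1,M_2,M_3$ (counted as a list). The core $G_c$ with respect to $M_1,M_2,M_3$ is the subgraph of $G$ induced by the edge set $E_0\cup E_2\cup E_3$; it is a $k$-core if $|E_0|=k$. The core is cyclic if it is a union of pairwise vertex-disjoint circuits. $G_c$ is a Petersen core (with respect to $M_1,M_2,M_3$) if (1) $G_c$ is cyclic, and (2) for every path $P$ of length 5 in $G_c$ there do not exist two distinct edges $e_1,e_2$ of $P$ and indices $1\le i<j\le 3$ with $e_1,e_2\in M_i\cap M_j$. For a 1-factor $M$ of $G$, $\overline{M}$ denotes the complementary 2-factor $G-M$, and $|\overline{M}|_{odd}$ the number of its odd components (odd circuits). *)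

theory Defs
  imports Main "HOL-Library.Multiset"
begin

text \<open>A finite multigraph (multiple edges and loops allowed): vertex set V, edge set E,
  and an endpoint map assigning to each edge the multiset of its two ends
  (a loop at v has ends {#v,v#}).\<close>

definition multigraph :: "'v set \<Rightarrow> 'e set \<Rightarrow> ('e \<Rightarrow> 'v multiset) \<Rightarrow> bool" where
  "multigraph V E ends \<longleftrightarrow> finite V \<and> finite E \<and>
     (\<forall>e\<in>E. size (ends e) = 2 \<and> set_mset (ends e) \<subseteq> V)"

definition deg :: "('e \<Rightarrow> 'v multiset) \<Rightarrow> 'e set \<Rightarrow> 'v \<Rightarrow> nat" where
  "deg ends F v = (\<Sum>e\<in>F. count (ends e) v)"

definition cubic :: "'v set \<Rightarrow> 'e set \<Rightarrow> ('e \<Rightarrow> 'v multiset) \<Rightarrow> bool" where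
  "cubic V E ends \<longleftrightarrow> multigraph V E ends \<and> (\<forall>v\<in>V. deg ends E v = 3)"

definition reach :: "('e \<Rightarrow> 'v multiset) \<Rightarrow> 'e set \<Rightarrow> 'v \<Rightarrow> 'v \<Rightarrow> bool" where
  "reach ends F = (\<lambda>u v. \<exists>e\<in>F. ends e = {#u, v#})\<^sup>*\<^sup>*"

text \<open>A bridge is an edge whose deletion increases the number of components,
  i.e. its two ends are no longer connected after deleting it.\<close>
definition bridge :: "'e set \<Rightarrow> ('e \<Rightarrow> 'v multiset) \<Rightarrow> 'e \<Rightarrow> bool" where
  "bridge E ends e \<longleftrightarrow> e \<in> E \<and>
     (\<exists>u v. ends e = {#u, v#} \<and> \<not> reach ends (E - {e}) u v)"

definition bridgeless :: "'e set \<Rightarrow> ('e \<Rightarrow> 'v multiset) \<Rightarrow> bool" where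
  "bridgeless E ends \<longleftrightarrow> (\<forall>e\<in>E. \<not> bridge E ends e)"

text \<open>1-factor: spanning 1-regular subgraph, identified with its edge set.\<close>
definition one_factor :: "'v set \<Rightarrow> 'e set \<Rightarrow> ('e \<Rightarrow> 'v multiset) \<Rightarrow> 'e set \<Rightarrow> bool" where
  "one_factor V E ends M \<longleftrightarrow> M \<subseteq> E \<and> (\<forall>v\<in>V. deg ends M v = 1)"

definition components :: "'v set \<Rightarrow> ('e \<Rightarrow> 'v multiset) \<Rightarrow> 'e set \<Rightarrow> 'v set set" where
  "components V ends F = {{w\<in>V. reach ends F v w} | v. v \<in> V}"

text \<open>Number of odd components (odd circuits) of the complementary 2-factor G - M.
  A circuit is odd iff it has an odd number of vertices (= number of edges).\<close>
definition odd_comps :: "'v set \<Rightarrow> 'e set \<Rightarrow> ('e \<Rightarrow> 'v multiset) \<Rightarrow> 'e set \<Rightarrow> nat" where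
  "odd_comps V E ends M = card {C \<in> components V ends (E - M). odd (card C)}"

definition mult3 :: "'e set \<Rightarrow> 'e set \<Rightarrow> 'e set \<Rightarrow> 'e \<Rightarrow> nat" where
  "mult3 M1 M2 M3 e = (if e \<in> M1 then 1 else 0) + (if e \<in> M2 then 1 else 0) + (if e \<in> M3 then 1 else 0)"

definition Ei :: "'e set \<Rightarrow> 'e set \<Rightarrow> 'e set \<Rightarrow> 'e set \<Rightarrow> nat \<Rightarrow> 'e set" where
  "Ei E M1 M2 M3 i = {e \<in> E. mult3 M1 M2 M3 e = i}"

text \<open>Edge set of the core; the core is the subgraph induced by it.\<close>
definition core_edges :: "'e set \<Rightarrow> 'e set \<Rightarrow> 'e set \<Rightarrow> 'e set \<Rightarrow> 'e set" where
  "core_edges E M1 M2 M3 = Ei E M1 M2 M3 0 \<union> Ei E M1 M2 M3 2 \<union> Ei E M1 M2 M3 3"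

definition verts_of :: "('e \<Rightarrow> 'v multiset) \<Rightarrow> 'e set \<Rightarrow> 'v set" where
  "verts_of ends F = (\<Union>e\<in>F. set_mset (ends e))"

definition circuit :: "('e \<Rightarrow> 'v multiset) \<Rightarrow> 'e set \<Rightarrow> bool" where
  "circuit ends C \<longleftrightarrow> C \<noteq> {} \<and> finite C \<and>
     (\<forall>v\<in>verts_of ends C. deg ends C v = 2) \<and>
     (\<forall>u\<in>verts_of ends C. \<forall>v\<in>verts_of ends C. reach ends C u v)"

definition cyclic :: "('e \<Rightarrow> 'v multiset) \<Rightarrow> 'e set \<Rightarrow> bool" where
  "cyclic ends F \<longleftrightarrow> (\<exists>\<C>. (\<forall>C\<in>\<C>. circuit ends C) \<and> \<Union>\<C> = F \<and>
     (\<forall>C\<in>\<C>. \<forall>D\<in>\<C>. C \<noteq> D \<longrightarrow> verts_of ends C \<inter> verts_of ends D = {}))"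

definition is_path :: "('e \<Rightarrow> 'v multiset) \<Rightarrow> 'e set \<Rightarrow> nat \<Rightarrow> 'v list \<Rightarrow> 'e list \<Rightarrow> bool" where
  "is_path ends F n vs es \<longleftrightarrow> length es = n \<and> length vs = Suc n \<and> distinct vs \<and>
     (\<forall>i<n. es ! i \<in> F \<and> ends (es ! i) = {#vs ! i, vs ! Suc i#})"

definition petersen_core :: "'e set \<Rightarrow> ('e \<Rightarrow> 'v multiset) \<Rightarrow> 'e set \<Rightarrow> 'e set \<Rightarrow> 'e set \<Rightarrow> bool" where
  "petersen_core E ends M1 M2 M3 \<longleftrightarrow>
     (let Ec = core_edges E M1 M2 M3 in
      cyclic ends Ec \<and>
      (\<forall>vs es. is_path ends Ec 5 vs es \<longrightarrow>
         \<not> (\<exists>e1\<in>set es. \<exists>e2\<in>set es. e1 \<noteq> e2 \<and>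
              (\<exists>(A, B)\<in>{(M1, M2), (M1, M3), (M2, M3)}. e1 \<in> A \<inter> B \<and> e2 \<in> A \<inter> B))))"

end

theory Submission
  imports Defs
begin

text \<open>
  Let E0 be the set of edges lying in none of the three factors. At a vertex v the three factor
  edges are pairwise distinct, or exactly two of them coincide, or all three coincide (v is
  triple); accordingly v meets 0, 1 or 2 edges of E0. An odd circuit C of the 2-factor G - M_i
  cannot be perfectly matched by M_j, so for each j \<noteq> i it contains a vertex at which M_i and
  M_j use the same edge. Charging such vertices, with a correction at triple vertices, gives every
  odd circuit of G - M_i a charge of at least 2, while the total charge at a vertex is at most
  twice its E0-degree; summing over all vertices and the three factors, twice the number of odd
  circuits is at most 4 |E0| = 4 k.

  In the equality case every estimate is tight. This excludes triple vertices, so the core is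
  2-regular and hence cyclic; and two vertices where M_i and M_j agree never lie in one component
  of G - M_i, which leaves no room for two edges of M_i \<inter> M_j on a path of length 5.
\<close>

section \<open>Walks, components and circuits\<close>

lemma reach_edge: "e \<in> F \<Longrightarrow> ends e = {#u, v#} \<Longrightarrow> reach ends F u v"
  unfolding reach_def by (rule r_into_rtranclp) blast

lemma reach_refl [simp]: "reach ends F u u"
  unfolding reach_def by simp

lemma reach_trans: "reach ends F u v \<Longrightarrow> reach ends F v w \<Longrightarrow> reach ends F u w"
  unfolding reach_def by (rule rtranclp_trans)

lemma reach_sym: "reach ends F u v \<Longrightarrow> reach ends F v u"
  unfolding reach_def
proof (induction rule: rtranclp_induct)
  case (step y z)
  then obtain e where "e \<in> F" "ends e = {#z, y#}" by (auto simp: add_mset_commute)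
  then have "reach ends F z y" by (rule reach_edge)
  then show ?case using step.IH unfolding reach_def by (rule rtranclp_trans)
qed simp

lemma mset_size_2_obtain:
  assumes "size M = 2" and "u \<in># M"
  obtains y where "M = {#u, y#}"
proof -
  obtain a N where "M = add_mset a N" "size N = 1"
    using assms(1) size_eq_Suc_imp_eq_union[of M 1] by auto
  moreover obtain b where "N = {#b#}" using \<open>size N = 1\<close> size_1_singleton_mset by blast
  ultimately show thesis using assms(2) that by (auto simp: add_mset_commute)
qed

lemma sum_count_eq_size:
  assumes "finite V" "set_mset M \<subseteq> V"
  shows "(\<Sum>v\<in>V. count M v) = size M"
  using assms by (simp add: size_multiset_overloaded_eq sum.mono_neutral_right count_eq_zero_iff)

lemma handshake:
  assumes "finite V" "finite F" "\<forall>e\<in>F. size (ends e) = 2 \<and> set_mset (ends e) \<subseteq> V"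
  shows "(\<Sum>v\<in>V. deg ends F v) = 2 * card F"
proof -
  have "(\<Sum>v\<in>V. deg ends F v) = (\<Sum>e\<in>F. \<Sum>v\<in>V. count (ends e) v)"
    unfolding deg_def by (rule sum.swap)
  also have "\<dots> = (\<Sum>e\<in>F. 2)"
    using assms by (intro sum.cong) (auto simp: sum_count_eq_size)
  finally show ?thesis by simp
qed

lemma perfect_matching_even_card:
  assumes "finite C" "finite F" "\<forall>e\<in>F. size (ends e) = 2 \<and> set_mset (ends e) \<subseteq> C"
    and "\<forall>u\<in>C. deg ends F u = 1"
  shows "even (card C)"
proof -
  have "card C = (\<Sum>u\<in>C. deg ends F u)" using assms(4) by simp
  also have "\<dots> = 2 * card F" using handshake[OF assms(1-3)] .
  finally show ?thesis by simp
qed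

definition component_of :: "'v set \<Rightarrow> ('e \<Rightarrow> 'v multiset) \<Rightarrow> 'e set \<Rightarrow> 'v \<Rightarrow> 'v set" where
  "component_of V ends F v = {w\<in>V. reach ends F v w}"

lemma components_iff: "C \<in> components V ends F \<longleftrightarrow> (\<exists>v\<in>V. C = component_of V ends F v)"
  unfolding components_def component_of_def by blast

lemma component_of_self: "v \<in> V \<Longrightarrow> v \<in> component_of V ends F v"
  unfolding component_of_def by simp

lemma component_of_in_components: "v \<in> V \<Longrightarrow> component_of V ends F v \<in> components V ends F"
  unfolding components_iff by blast

lemma components_eq_component_of:
  assumes "C \<in> components V ends F" "u \<in> C"
  shows "C = component_of V ends F u"
proof -
  obtain v where C: "C = component_of V ends F v" using assms(1) unfolding components_iff by blast
  with assms(2) have vu: "reach ends F v u" unfolding component_of_def by blast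
  have "reach ends F v w \<longleftrightarrow> reach ends F u w" for w
    using reach_trans[OF vu, of w] reach_trans[OF reach_sym[OF vu], of w] by blast
  then show ?thesis unfolding C component_of_def by simp
qed

lemma components_subset: "C \<in> components V ends F \<Longrightarrow> C \<subseteq> V"
  unfolding components_iff component_of_def by blast

lemma components_reach_closed:
  "C \<in> components V ends F \<Longrightarrow> u \<in> C \<Longrightarrow> w \<in> V \<Longrightarrow> reach ends F u w \<Longrightarrow> w \<in> C"
  using components_eq_component_of[of C V ends F u] unfolding component_of_def by blast

lemma finite_components: "finite V \<Longrightarrow> finite (components V ends F)"
  unfolding components_def by (simp add: setcompr_eq_image)

lemma sum_components:
  assumes "finite V"
  shows "(\<Sum>C\<in>components V ends F. \<Sum>u\<in>C. g u) = (\<Sum>u\<in>V. g u)"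
proof -
  have union: "\<Union>(components V ends F) = V"
  proof
    show "V \<subseteq> \<Union>(components V ends F)"
      using component_of_self component_of_in_components by fast
  qed (use components_subset in blast)
  have "\<forall>C\<in>components V ends F. finite C"
    using components_subset assms finite_subset by metis
  moreover have "\<forall>A\<in>components V ends F. \<forall>B\<in>components V ends F. A \<noteq> B \<longrightarrow> A \<inter> B = {}"
  proof (intro ballI impI, rule ccontr)
    fix A B assume AB: "A \<in> components V ends F" "B \<in> components V ends F" "A \<noteq> B"
    assume "A \<inter> B \<noteq> {}"
    then obtain u where "u \<in> A" "u \<in> B" by blast
    then show False using AB components_eq_component_of[of _ V ends F u] by metis
  qed
  ultimately have "(\<Sum>u\<in>\<Union>(components V ends F). g u) = (\<Sum>C\<in>components V ends F. \<Sum>u\<in>C. g u)"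
    by (simp add: sum.Union_disjoint)
  then show ?thesis unfolding union by simp
qed

definition edge_component :: "('e \<Rightarrow> 'v multiset) \<Rightarrow> 'e set \<Rightarrow> 'v \<Rightarrow> 'e set" where
  "edge_component ends F x = {e\<in>F. \<exists>u. u \<in># ends e \<and> reach ends F x u}"

context
  fixes ends :: "'e \<Rightarrow> 'v multiset" and F :: "'e set"
  assumes edges_size_2: "\<forall>e\<in>F. size (ends e) = 2"
begin

lemma edge_component_reach:
  assumes "e \<in> edge_component ends F x" "v \<in># ends e"
  shows "reach ends F x v"
proof -
  obtain u where u: "e \<in> F" "u \<in># ends e" "reach ends F x u"
    using assms(1) unfolding edge_component_def by blast
  then obtain y where y: "ends e = {#u, y#}" using edges_size_2 mset_size_2_obtain by metis
  then have "v = u \<or> v = y" using assms(2) by auto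
  then show ?thesis using u(3) reach_trans[OF u(3) reach_edge[of e F ends u y, OF u(1) y]] by blast
qed

lemma reach_in_edge_component:
  assumes "reach ends F x y"
  shows "reach ends (edge_component ends F x) x y"
  using assms unfolding reach_def
proof (induction rule: rtranclp_induct)
  case (step y z)
  then obtain e where "e \<in> F" "ends e = {#y, z#}" by blast
  with step.hyps(1) have "e \<in> edge_component ends F x"
    unfolding edge_component_def reach_def by auto
  with step.IH \<open>ends e = _\<close> show ?case
    unfolding reach_def[symmetric] by (blast intro: reach_trans reach_edge)
qed simp

lemma edge_component_eq: "reach ends F x y \<Longrightarrow> edge_component ends F x = edge_component ends F y"
  unfolding edge_component_def by (blast intro: reach_trans reach_sym)

lemma deg_edge_component:
  assumes "finite F" "reach ends F x v"
  shows "deg ends (edge_component ends F x) v = deg ends F v"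
  unfolding deg_def
proof (rule sum.mono_neutral_left)
  show "\<forall>e\<in>F - edge_component ends F x. count (ends e) v = 0"
    using assms(2) unfolding edge_component_def by (auto simp: count_eq_zero_iff)
qed (use assms(1) in \<open>auto simp: edge_component_def\<close>)

lemma circuit_edge_component:
  assumes "finite F" and two_regular: "\<forall>v\<in>verts_of ends F. deg ends F v = 2"
    and x: "x \<in> verts_of ends F"
  shows "circuit ends (edge_component ends F x)"
proof -
  let ?K = "edge_component ends F x"
  obtain e where "e \<in> F" "x \<in># ends e" using x unfolding verts_of_def by auto
  then have "e \<in> ?K" unfolding edge_component_def by auto
  then have "?K \<noteq> {}" by blast
  moreover have "finite ?K" using assms(1) unfolding edge_component_def by simp
  moreover have "deg ends ?K v = 2" if v: "v \<in> verts_of ends ?K" for v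
  proof -
    obtain e where e: "e \<in> ?K" "v \<in># ends e" using v unfolding verts_of_def by blast
    then have "v \<in> verts_of ends F" unfolding verts_of_def edge_component_def by blast
    with e show ?thesis
      using two_regular deg_edge_component[OF assms(1) edge_component_reach] by simp
  qed
  moreover have "reach ends ?K u v" if "u \<in> verts_of ends ?K" "v \<in> verts_of ends ?K" for u v
  proof -
    have from_x: "reach ends ?K x w" if "w \<in> verts_of ends ?K" for w
      using that edge_component_reach reach_in_edge_component unfolding verts_of_def by blast
    show ?thesis using reach_trans[OF reach_sym[OF from_x] from_x] that .
  qed
  ultimately show ?thesis unfolding circuit_def by blast
qed

lemma edge_components_disjoint:
  assumes "verts_of ends (edge_component ends F x) \<inter> verts_of ends (edge_component ends F y) \<noteq> {}"
  shows "edge_component ends F x = edge_component ends F y"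
proof -
  obtain v e e' where "e \<in> edge_component ends F x" "v \<in># ends e"
    "e' \<in> edge_component ends F y" "v \<in># ends e'"
    using assms unfolding verts_of_def by blast
  then have "reach ends F x v" "reach ends F y v" using edge_component_reach by blast+
  then have "reach ends F x y" by (blast intro: reach_trans reach_sym)
  then show ?thesis by (rule edge_component_eq)
qed

lemma two_regular_cyclic:
  assumes "finite F" and two_regular: "\<forall>v\<in>verts_of ends F. deg ends F v = 2"
  shows "cyclic ends F"
proof -
  let ?\<C> = "edge_component ends F ` verts_of ends F"
  have union: "\<Union>?\<C> = F"
  proof
    show "F \<subseteq> \<Union>?\<C>"
    proof
      fix e assume e: "e \<in> F"
      then obtain a where "a \<in># ends e"
        using edges_size_2 by (metis multiset_nonemptyE size_empty zero_neq_numeral)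
      with e have "a \<in> verts_of ends F" "e \<in> edge_component ends F a"
        unfolding verts_of_def edge_component_def by auto
      then show "e \<in> \<Union>?\<C>" by blast
    qed
  qed (auto simp: edge_component_def)
  have "\<forall>C\<in>?\<C>. \<forall>D\<in>?\<C>. C \<noteq> D \<longrightarrow> verts_of ends C \<inter> verts_of ends D = {}"
    using edge_components_disjoint by blast
  moreover have "\<forall>C\<in>?\<C>. circuit ends C" using circuit_edge_component[OF assms] by blast
  ultimately show ?thesis unfolding cyclic_def using union by blast
qed

end
lemma path_reach:
  assumes P: "is_path ends F n vs es" and "a \<le> b" "b \<le> n" and "\<forall>t. a \<le> t \<and> t < b \<longrightarrow> es ! t \<in> F'"
  shows "reach ends F' (vs ! a) (vs ! b)"
  using assms(2-4)
proof (induction b)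
  case (Suc b)
  show ?case
  proof (cases "a = Suc b")
    case False
    then have "reach ends F' (vs ! a) (vs ! b)" using Suc by simp
    moreover have "reach ends F' (vs ! b) (vs ! Suc b)"
      using P Suc.prems False unfolding is_path_def by (intro reach_edge[of "es ! b"]) auto
    ultimately show ?thesis by (rule reach_trans)
  qed simp
qed simp

lemma path_adjacent_edges_distinct:
  assumes P: "is_path ends F n vs es" and t: "Suc t < n"
  shows "es ! t \<noteq> es ! Suc t"
proof
  assume same: "es ! t = es ! Suc t"
  have "vs ! t \<in># ends (es ! Suc t)" using P t same unfolding is_path_def by (metis Suc_lessD union_single_eq_member)
  then have "vs ! t = vs ! Suc t \<or> vs ! t = vs ! Suc (Suc t)" using P t unfolding is_path_def by auto
  moreover have "length vs = Suc n" "distinct vs" using P unfolding is_path_def by auto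
  ultimately show False using t by (auto simp: nth_eq_iff_index_eq)
qed

lemma sum_less_three: "(\<Sum>i<3. f i) = f 0 + f 1 + f (2::nat)"
  by (simp add: numeral_3_eq_3 numeral_2_eq_2 lessThan_Suc add.commute add.left_commute)

lemma less_three_cases: "(i::nat) < 3 \<Longrightarrow> i = 0 \<or> i = 1 \<or> i = 2"
  by arith

lemma all_less_three: "(\<forall>i<3. P i) \<longleftrightarrow> P 0 \<and> P 1 \<and> P (2::nat)"
  by (auto simp: numeral_3_eq_3 numeral_2_eq_2 less_Suc_eq)

lemma ex_less_three: "(\<exists>i<3. P i) \<longleftrightarrow> P 0 \<or> P 1 \<or> P (2::nat)"
  by (auto simp: numeral_3_eq_3 numeral_2_eq_2 less_Suc_eq)

lemma third_index:
  fixes a b :: nat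
  assumes "a < 3" "b < 3" "a \<noteq> b"
  shows "3 - a - b < 3" "3 - a - b \<noteq> a" "3 - a - b \<noteq> b"
    and "j < 3 \<Longrightarrow> j = a \<or> j = b \<or> j = 3 - a - b"
  using assms by arith+

lemma sum_three_indices:
  fixes a b :: nat
  assumes "a < 3" "b < 3" "a \<noteq> b"
  shows "(\<Sum>i<3. f i) = f a + f b + f (3 - a - b)"
  using less_three_cases[OF assms(1)] less_three_cases[OF assms(2)] assms(3)
  by (auto simp: sum_less_three ac_simps)

lemma sum_pair_le:
  assumes "finite C" "u \<in> C" "x \<in> C" "u \<noteq> x"
  shows "f u + f x \<le> (\<Sum>y\<in>C. f y :: nat)"
proof -
  have "(\<Sum>y\<in>{u, x}. f y) \<le> (\<Sum>y\<in>C. f y)" using assms by (intro sum_mono2) auto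
  then show ?thesis using assms by simp
qed

lemma sum_triple_le:
  assumes "finite C" "u \<in> C" "x \<in> C" "y \<in> C" "u \<noteq> x" "u \<noteq> y" "x \<noteq> y"
  shows "f u + f x + f y \<le> (\<Sum>z\<in>C. f z :: nat)"
proof -
  have "(\<Sum>z\<in>{u, x, y}. f z) \<le> (\<Sum>z\<in>C. f z)" using assms by (intro sum_mono2) auto
  then show ?thesis using assms by simp
qed

locale bridgeless_cubic =
  fixes V :: "'v set" and E :: "'e set" and ends :: "'e \<Rightarrow> 'v multiset"
  assumes cubic: "cubic V E ends" and bridgeless: "bridgeless E ends"
begin

lemma finite_V: "finite V"
  and finite_E: "finite E"
  and edge_size: "e \<in> E \<Longrightarrow> size (ends e) = 2"
  and edge_ends: "e \<in> E \<Longrightarrow> set_mset (ends e) \<subseteq> V"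
  and deg_3: "v \<in> V \<Longrightarrow> deg ends E v = 3"
  using cubic unfolding cubic_def multigraph_def by blast+

lemma edge_end_in_V: "e \<in> E \<Longrightarrow> v \<in># ends e \<Longrightarrow> v \<in> V"
  using edge_ends by blast

text \<open>A loop at a leaves room for a single further edge at a, and that edge is a bridge.\<close>

lemma no_loop:
  assumes e: "e \<in> E"
  shows "ends e \<noteq> {#a, a#}"
proof
  assume loop: "ends e = {#a, a#}"
  have "a \<in> V" using edge_ends[OF e] loop by simp
  then have "count (ends e) a + (\<Sum>e'\<in>E - {e}. count (ends e') a) = 3"
    using deg_3 finite_E e unfolding deg_def by (simp add: sum.remove)
  then have rest: "(\<Sum>e'\<in>E - {e}. count (ends e') a) = 1" using loop by simp
  then obtain g where g: "g \<in> E - {e}" "count (ends g) a \<noteq> 0"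
    by (metis sum.not_neutral_contains_not_neutral zero_neq_one)
  have "count (ends g) a + (\<Sum>e'\<in>E - {e} - {g}. count (ends e') a) = 1"
    using rest g(1) finite_E by (simp add: sum.remove)
  then have g_once: "count (ends g) a = 1"
    and "(\<Sum>e'\<in>E - {e} - {g}. count (ends e') a) = 0" using g(2) by linarith+
  then have others: "\<And>e'. e' \<in> E - {e} - {g} \<Longrightarrow> count (ends e') a = 0"
    using finite_E by simp
  obtain w where w: "ends g = {#a, w#}"
    using mset_size_2_obtain[OF edge_size] g by (metis count_eq_zero_iff Diff_iff)
  with g_once have "w \<noteq> a" by auto
  have "x = a" if "reach ends (E - {g}) a x" for x
    using that unfolding reach_def
  proof (induction rule: rtranclp_induct)
    case (step y z)
    then obtain e' where e': "e' \<in> E - {g}" "ends e' = {#a, z#}" by blast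
    then have "e' = e" using others by fastforce
    then show ?case using e'(2) loop by simp
  qed simp
  then have "\<not> reach ends (E - {g}) a w" using \<open>w \<noteq> a\<close> by blast
  then have "bridge E ends g" unfolding bridge_def using g(1) w by blast
  then show False using bridgeless g(1) unfolding bridgeless_def by blast
qed

lemma other_end:
  assumes "e \<in> E" "v \<in># ends e"
  obtains x where "x \<noteq> v" "ends e = {#v, x#}"
  using mset_size_2_obtain[OF edge_size[OF assms(1)] assms(2)] no_loop[OF assms(1)] that by metis

lemma count_ends:
  assumes "e \<in> E"
  shows "count (ends e) v = (if v \<in># ends e then 1 else 0)"
proof (cases "v \<in># ends e")
  case True
  then obtain x where "x \<noteq> v" "ends e = {#v, x#}" using other_end assms by blast
  then show ?thesis by auto
qed (simp add: not_in_iff)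

definition incident :: "'e set \<Rightarrow> 'v \<Rightarrow> 'e set" where
  "incident F v = {e\<in>F. v \<in># ends e}"

lemma finite_subset_E: "F \<subseteq> E \<Longrightarrow> finite F"
  using finite_E finite_subset by blast

lemma finite_incident: "F \<subseteq> E \<Longrightarrow> finite (incident F v)"
  unfolding incident_def using finite_subset_E by simp

lemma deg_eq_card_incident: "F \<subseteq> E \<Longrightarrow> deg ends F v = card (incident F v)"
proof -
  assume F: "F \<subseteq> E"
  then have "deg ends F v = (\<Sum>e\<in>F. if v \<in># ends e then 1 else 0)"
    unfolding deg_def using count_ends by (intro sum.cong) auto
  also have "\<dots> = card (incident F v)"
    using finite_subset_E[OF F] unfolding incident_def by (simp add: sum.If_cases Int_def)
  finally show ?thesis .
qed

lemma card_incident_E: "v \<in> V \<Longrightarrow> card (incident E v) = 3"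
  using deg_3 deg_eq_card_incident by simp

end

locale three_factors = bridgeless_cubic V E ends
  for V :: "'v set" and E :: "'e set" and ends :: "'e \<Rightarrow> 'v multiset" +
  fixes M1 M2 M3 :: "'e set"
  assumes one_factors: "one_factor V E ends M1" "one_factor V E ends M2" "one_factor V E ends M3"
begin

text \<open>The factors are indexed by i < 3; larger indices also yield M3.\<close>

definition factor :: "nat \<Rightarrow> 'e set" where
  "factor i = (if i = 0 then M1 else if i = 1 then M2 else M3)"

lemma factor_subset: "factor i \<subseteq> E"
  and deg_factor: "v \<in> V \<Longrightarrow> deg ends (factor i) v = 1"
  using one_factors unfolding factor_def one_factor_def by auto

definition factor_edge :: "nat \<Rightarrow> 'v \<Rightarrow> 'e" where
  "factor_edge i v = (THE e. e \<in> factor i \<and> v \<in># ends e)"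

lemma factor_edge_unique:
  assumes "v \<in> V"
  shows "\<exists>!e. e \<in> factor i \<and> v \<in># ends e"
proof -
  have "card (incident (factor i) v) = 1"
    using deg_factor[OF assms] deg_eq_card_incident[OF factor_subset] by simp
  then obtain x where "incident (factor i) v = {x}" by (auto simp: card_1_singleton_iff)
  then have "\<forall>e. e \<in> factor i \<and> v \<in># ends e \<longleftrightarrow> e = x" unfolding incident_def by blast
  then show ?thesis by (intro ex1I[of _ x]) auto
qed

lemma factor_edge:
  assumes "v \<in> V"
  shows "factor_edge i v \<in> factor i" "v \<in># ends (factor_edge i v)"
  using theI'[OF factor_edge_unique[OF assms]] unfolding factor_edge_def by auto

lemma factor_edge_eq: "v \<in> V \<Longrightarrow> e \<in> factor i \<Longrightarrow> v \<in># ends e \<Longrightarrow> factor_edge i v = e"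
  using factor_edge factor_edge_unique by blast

lemma factor_edge_mem:
  "v \<in> V \<Longrightarrow> factor_edge a v \<in> factor k \<longleftrightarrow> factor_edge a v = factor_edge k v"
  using factor_edge factor_edge_eq by metis

lemma factor_edge_in_E: "v \<in> V \<Longrightarrow> factor_edge i v \<in> E"
  using factor_edge(1) factor_subset by blast

definition E0 :: "'e set" where
  "E0 = {e\<in>E. \<forall>i<3. e \<notin> factor i}"

lemma Ei_0_eq_E0: "Ei E M1 M2 M3 0 = E0"
  unfolding Ei_def E0_def mult3_def all_less_three by (auto simp: factor_def)

lemma E0_subset: "E0 \<subseteq> E"
  unfolding E0_def by blast

lemma E0_not_in_factor: "e \<in> E0 \<Longrightarrow> e \<notin> factor i"
  unfolding E0_def factor_def by (auto split: if_splits)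

definition factor_edges :: "'v \<Rightarrow> 'e set" where
  "factor_edges v = {factor_edge 0 v, factor_edge 1 v, factor_edge 2 v}"

lemma mem_factor_edges:
  assumes v: "v \<in> V" and "v \<in># ends e"
  shows "e \<in> factor_edges v \<longleftrightarrow> (\<exists>i<3. e \<in> factor i)"
proof
  assume "e \<in> factor_edges v"
  then show "\<exists>i<3. e \<in> factor i"
    unfolding factor_edges_def
    using factor_edge(1)[OF v, of 0] factor_edge(1)[OF v, of 1] factor_edge(1)[OF v, of 2] by force
next
  assume "\<exists>i<3. e \<in> factor i"
  then obtain i where "i < 3" "factor_edge i v = e" using factor_edge_eq[OF v _ assms(2)] by blast
  then show "e \<in> factor_edges v" unfolding factor_edges_def using less_three_cases by auto
qed

lemma incident_E0: "v \<in> V \<Longrightarrow> incident E0 v = incident E v - factor_edges v"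
  unfolding incident_def E0_def using mem_factor_edges by auto

lemma deg_E0: "v \<in> V \<Longrightarrow> deg ends E0 v = 3 - card (factor_edges v)"
proof -
  assume v: "v \<in> V"
  have "factor_edges v \<subseteq> incident E v"
    unfolding factor_edges_def incident_def using factor_edge[OF v] factor_edge_in_E[OF v] by auto
  moreover have "finite (factor_edges v)" unfolding factor_edges_def by simp
  ultimately show ?thesis
    using deg_eq_card_incident[OF E0_subset] incident_E0[OF v] card_incident_E[OF v]
    by (simp add: card_Diff_subset)
qed

definition triple :: "'v \<Rightarrow> bool" where
  "triple v \<longleftrightarrow> factor_edge 0 v = factor_edge 1 v \<and> factor_edge 1 v = factor_edge 2 v"

definition shared :: "nat \<Rightarrow> 'v \<Rightarrow> bool" where
  "shared i v \<longleftrightarrow> (\<exists>j<3. j \<noteq> i \<and> factor_edge i v = factor_edge j v)"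

lemma card_factor_edges_triple: "triple v \<Longrightarrow> card (factor_edges v) = 1"
  unfolding triple_def factor_edges_def by simp

lemma card_factor_edges_not_triple: "\<not> triple v \<Longrightarrow> card (factor_edges v) \<ge> 2"
  unfolding triple_def factor_edges_def by (auto simp: card_insert_if)

lemma triple_shared:
  assumes "triple v" "i < 3"
  shows "shared i v"
proof -
  have "factor_edge i v = factor_edge 0 v" "factor_edge i v = factor_edge 1 v"
    using assms less_three_cases[of i] unfolding triple_def by auto
  then show ?thesis
    unfolding shared_def by (cases "i = 0") (auto intro: exI[of _ 0] exI[of _ 1])
qed

lemma shared_agreement:
  "a < 3 \<Longrightarrow> b < 3 \<Longrightarrow> a \<noteq> b \<Longrightarrow> factor_edge a v = factor_edge b v \<Longrightarrow> shared a v \<and> shared b v"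
  unfolding shared_def by metis

lemma factor_edges_agreement:
  assumes "a < 3" "b < 3" "a \<noteq> b" "factor_edge a v = factor_edge b v"
  shows "factor_edges v = {factor_edge a v, factor_edge (3 - a - b) v}"
  using less_three_cases[OF assms(1)] less_three_cases[OF assms(2)] assms(3,4)
  unfolding factor_edges_def by auto

lemma triple_agreements:
  assumes ab: "a < 3" "b < 3" "a \<noteq> b"
    and "factor_edge a v = factor_edge b v" "factor_edge a v = factor_edge (3 - a - b) v"
  shows "triple v"
  using card_factor_edges_not_triple factor_edges_agreement[OF ab assms(4)] assms(5) by fastforce

lemma not_shared_third:
  assumes "\<not> triple v" and ab: "a < 3" "b < 3" "a \<noteq> b" "factor_edge a v = factor_edge b v"
  shows "\<not> shared (3 - a - b) v"
proof
  assume "shared (3 - a - b) v"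
  then obtain j where "j < 3" "j \<noteq> 3 - a - b" "factor_edge (3 - a - b) v = factor_edge j v"
    unfolding shared_def by blast
  then have "factor_edge a v = factor_edge (3 - a - b) v" using ab third_index(4)[OF ab(1-3)] by metis
  then show False using assms triple_agreements by blast
qed

lemma deg_E0_triple: "v \<in> V \<Longrightarrow> triple v \<Longrightarrow> deg ends E0 v = 2"
  using deg_E0 card_factor_edges_triple by simp

lemma deg_E0_le_1: "v \<in> V \<Longrightarrow> \<not> triple v \<Longrightarrow> deg ends E0 v \<le> 1"
  using deg_E0 card_factor_edges_not_triple by fastforce

lemma deg_E0_agreement:
  assumes v: "v \<in> V" and "\<not> triple v"
    and ab: "a < 3" "b < 3" "a \<noteq> b" "factor_edge a v = factor_edge b v"
  shows "deg ends E0 v = 1"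
proof -
  have "factor_edge a v \<noteq> factor_edge (3 - a - b) v" using assms triple_agreements by blast
  then show ?thesis using deg_E0[OF v] factor_edges_agreement[OF ab] by simp
qed

lemma E0_agreement:
  assumes v: "v \<in> V" and "e \<in> E0" "v \<in># ends e"
  shows "\<exists>a<3. \<exists>b<3. a \<noteq> b \<and> factor_edge a v = factor_edge b v"
proof (rule ccontr)
  assume "\<not> ?thesis"
  then have "card (factor_edges v) = 3"
    unfolding factor_edges_def ex_less_three by auto
  then have "incident E0 v = {}"
    using deg_E0[OF v] deg_eq_card_incident[OF E0_subset] finite_incident[OF E0_subset] by auto
  then show False using assms(2,3) unfolding incident_def by blast
qed

lemma E0_neighbour:
  assumes "e \<in> E0" "v \<in># ends e"
  obtains x where "x \<noteq> v" "ends e = {#v, x#}" "x \<in> V"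
proof -
  have e: "e \<in> E" using assms(1) E0_subset by blast
  then obtain x where "x \<noteq> v" "ends e = {#v, x#}" using other_end assms(2) by blast
  moreover from this have "x \<in> V" using edge_end_in_V[OF e] by simp
  ultimately show thesis using that by blast
qed

subsection \<open>Charging the odd components\<close>

definition shared_nearby :: "nat \<Rightarrow> 'v \<Rightarrow> bool" where
  "shared_nearby i v \<longleftrightarrow> (\<exists>e\<in>E0. v \<in># ends e \<and> (\<exists>x. x \<noteq> v \<and> x \<in># ends e \<and> shared i x))"

text \<open>The component
  of G - M_i through a triple vertex may owe two partners to that single vertex, so a triple vertex
  is charged 2 unless an E0-neighbour in the same component already carries a charge for i.\<close>

definition charge :: "nat \<Rightarrow> 'v \<Rightarrow> nat" where
  "charge i v =
     (if triple v then if shared_nearby i v then 1 else 2 else if shared i v then 1 else 0)"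

lemma charge_le_2: "charge i v \<le> 2"
  unfolding charge_def by auto

lemma charge_pos: "shared i v \<Longrightarrow> 1 \<le> charge i v"
  unfolding charge_def by auto

lemma sum_charge_le_deg_E0:
  assumes v: "v \<in> V"
  shows "(\<Sum>i<3. charge i v) \<le> 2 * deg ends E0 v"
proof (cases "triple v")
  case True
  then have "incident E0 v \<noteq> {}" using deg_E0_triple[OF v] deg_eq_card_incident[OF E0_subset] by force
  then obtain e where e: "e \<in> E0" "v \<in># ends e" unfolding incident_def by blast
  then obtain x where x: "x \<noteq> v" "ends e = {#v, x#}" "x \<in> V" by (rule E0_neighbour)
  obtain a b where ab: "a < 3" "b < 3" "a \<noteq> b" "factor_edge a x = factor_edge b x"
    using E0_agreement[OF x(3) e(1)] x(2) by auto
  have "x \<in># ends e" using x(2) by simp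
  then have "shared_nearby a v" "shared_nearby b v"
    using shared_agreement[OF ab] e x(1) unfolding shared_nearby_def by blast+
  then have "charge a v = 1" "charge b v = 1" using True unfolding charge_def by auto
  then show ?thesis
    using sum_three_indices[OF ab(1-3), of "\<lambda>i. charge i v"] charge_le_2[of "3 - a - b" v]
      deg_E0_triple[OF v True] by simp
next
  case not_triple: False
  show ?thesis
  proof (cases "\<exists>a<3. \<exists>b<3. a \<noteq> b \<and> factor_edge a v = factor_edge b v")
    case True
    then obtain a b where ab: "a < 3" "b < 3" "a \<noteq> b" "factor_edge a v = factor_edge b v" by blast
    have "charge (3 - a - b) v = 0"
      using not_shared_third[OF not_triple ab] not_triple unfolding charge_def by simp
    moreover have "charge a v \<le> 1" "charge b v \<le> 1" using not_triple unfolding charge_def by auto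
    ultimately show ?thesis
      using sum_three_indices[OF ab(1-3), of "\<lambda>i. charge i v"] deg_E0_agreement[OF v not_triple ab]
      by simp
  next
    case False
    then have "charge i v = 0" if "i < 3" for i
      using not_triple that unfolding charge_def shared_def by auto
    then show ?thesis by simp
  qed
qed

definition comps :: "nat \<Rightarrow> 'v set set" where
  "comps i = components V ends (E - factor i)"

definition partners :: "nat \<Rightarrow> 'v set \<Rightarrow> nat" where
  "partners i C = card {j. j < 3 \<and> j \<noteq> i \<and> (\<exists>u\<in>C. factor_edge i u = factor_edge j u)}"

lemma finite_comps: "finite (comps i)"
  unfolding comps_def using finite_components[OF finite_V] .

lemma comps_subset: "C \<in> comps i \<Longrightarrow> C \<subseteq> V"
  unfolding comps_def by (rule components_subset)

lemma comps_finite: "C \<in> comps i \<Longrightarrow> finite C"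
  using comps_subset finite_V finite_subset by blast

lemma comps_edge_closed:
  assumes "C \<in> comps i" "u \<in> C" "e \<in> E" "e \<notin> factor i" "ends e = {#u, x#}"
  shows "x \<in> C"
proof -
  have "reach ends (E - factor i) u x" using assms(3-5) by (intro reach_edge[of e]) auto
  moreover have "x \<in> V" using edge_ends[OF assms(3)] assms(5) by simp
  ultimately show ?thesis
    using components_reach_closed assms(1,2) unfolding comps_def by metis
qed

lemma component_of_comps:
  assumes "v \<in> V"
  shows "component_of V ends (E - factor i) v \<in> comps i" "v \<in> component_of V ends (E - factor i) v"
  unfolding comps_def using component_of_in_components[OF assms] component_of_self[OF assms] .

lemma E0_neighbour_in_comp:
  assumes "C \<in> comps i" "v \<in> C" "e \<in> E0" "ends e = {#v, x#}"
  shows "x \<in> C"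
  using comps_edge_closed[OF assms(1,2) _ E0_not_in_factor[OF assms(3)] assms(4)] assms(3) E0_subset
  by (meson subsetD)

lemma partners_le_2: "i < 3 \<Longrightarrow> partners i C \<le> 2"
proof -
  assume "i < 3"
  have "partners i C \<le> card ({..<3} - {i})"
    unfolding partners_def by (intro card_mono) auto
  then show ?thesis using \<open>i < 3\<close> by simp
qed

text \<open>Otherwise factor j restricted to C would be a perfect matching of C.\<close>

lemma odd_component_agreement:
  assumes ij: "i < 3" "j < 3" "j \<noteq> i" and C: "C \<in> comps i" and odd: "odd (card C)"
  shows "\<exists>u\<in>C. factor_edge i u = factor_edge j u"
proof (rule ccontr)
  assume disagree: "\<not> ?thesis"
  define F where "F = {e \<in> factor j. set_mset (ends e) \<subseteq> C}"
  have F: "F \<subseteq> E" unfolding F_def using factor_subset by blast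
  have "incident F u = {factor_edge j u}" if u: "u \<in> C" for u
  proof -
    have uV: "u \<in> V" using u comps_subset[OF C] by blast
    have fj: "factor_edge j u \<in> E" "u \<in># ends (factor_edge j u)"
      using factor_edge_in_E[OF uV] factor_edge[OF uV] by auto
    have "factor_edge j u \<notin> factor i"
      using factor_edge_eq[OF uV _ fj(2), of i] disagree u by auto
    moreover obtain x where "ends (factor_edge j u) = {#u, x#}" using other_end[OF fj] by blast
    ultimately have "set_mset (ends (factor_edge j u)) \<subseteq> C"
      using comps_edge_closed[OF C u fj(1)] u by simp
    then have "factor_edge j u \<in> F" unfolding F_def using factor_edge(1)[OF uV] by blast
    then show ?thesis
      unfolding incident_def F_def using factor_edge_eq[OF uV] fj(2) by blast
  qed
  then have "\<forall>u\<in>C. deg ends F u = 1" using deg_eq_card_incident[OF F] by simp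
  moreover have "\<forall>e\<in>F. size (ends e) = 2 \<and> set_mset (ends e) \<subseteq> C"
    using F edge_size unfolding F_def by blast
  ultimately have "even (card C)"
    using perfect_matching_even_card comps_finite[OF C] finite_subset_E[OF F] by blast
  then show False using odd by simp
qed

lemma partners_odd_component:
  assumes "i < 3" "C \<in> comps i" "odd (card C)"
  shows "partners i C = 2"
proof -
  have "{j. j < 3 \<and> j \<noteq> i \<and> (\<exists>u\<in>C. factor_edge i u = factor_edge j u)} = {..<3} - {i}"
    using odd_component_agreement[OF assms(1) _ _ assms(2,3)] by auto
  then show ?thesis unfolding partners_def using assms(1) by simp
qed

lemma triple_component_charge:
  assumes C: "C \<in> comps i" and u: "u \<in> C" "triple u"
  shows "2 \<le> (\<Sum>w\<in>C. charge i w)"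
proof (cases "shared_nearby i u")
  case True
  then obtain e x where e: "e \<in> E0" "u \<in># ends e" and x: "x \<noteq> u" "x \<in># ends e" "shared i x"
    unfolding shared_nearby_def by blast
  obtain y where "ends e = {#u, y#}" by (rule E0_neighbour[OF e])
  with x have "ends e = {#u, x#}" by simp
  then have "x \<in> C" using E0_neighbour_in_comp[OF C u(1) e(1)] by blast
  then have "charge i u + charge i x \<le> (\<Sum>w\<in>C. charge i w)"
    using sum_pair_le[OF comps_finite[OF C] u(1)] x(1) by simp
  then show ?thesis using charge_pos[OF x(3)] u(2) True unfolding charge_def by simp
next
  case False
  then have "charge i u = 2" using u(2) unfolding charge_def by simp
  then show ?thesis using member_le_sum[OF u(1), of "charge i"] comps_finite[OF C] by simp
qed

lemma partners_le_charge:
  assumes i: "i < 3" and C: "C \<in> comps i"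
  shows "partners i C \<le> (\<Sum>u\<in>C. charge i u)"
proof -
  let ?J = "{j. j < 3 \<and> j \<noteq> i \<and> (\<exists>u\<in>C. factor_edge i u = factor_edge j u)}"
  show ?thesis
  proof (cases "card ?J \<le> 1")
    case True
    show ?thesis
    proof (cases "partners i C = 0")
      case False
      then have "?J \<noteq> {}" unfolding partners_def by auto
      then obtain u where "u \<in> C" "shared i u" unfolding shared_def by blast
      then have "1 \<le> (\<Sum>u\<in>C. charge i u)"
        using charge_pos member_le_sum[of u C "charge i"] comps_finite[OF C] by fastforce
      then show ?thesis using True unfolding partners_def by simp
    qed simp
  next
    case False
    then obtain j j' where jj: "j \<in> ?J" "j' \<in> ?J" "j \<noteq> j'"
      using card_le_Suc0_iff_eq[of ?J] by auto
    then obtain u u' where u: "u \<in> C" "factor_edge i u = factor_edge j u"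
      and u': "u' \<in> C" "factor_edge i u' = factor_edge j' u'" by blast
    have "2 \<le> (\<Sum>w\<in>C. charge i w)"
    proof (cases "u = u'")
      case True
      have "j' = 3 - i - j" using third_index(4)[of i j j'] i jj by auto
      then have "triple u" using triple_agreements[of i j u] u u' True i jj by auto
      then show ?thesis using triple_component_charge C u(1) by blast
    next
      case False
      have "shared i u" "shared i u'" using u u' jj unfolding shared_def by blast+
      then show ?thesis
        using sum_pair_le[OF comps_finite[OF C] u(1) u'(1) False, of "charge i"]
          charge_pos[of i u] charge_pos[of i u'] by linarith
    qed
    then show ?thesis using partners_le_2[OF i, of C] by linarith
  qed
qed

definition odd_count :: "nat \<Rightarrow> nat" where
  "odd_count i = odd_comps V E ends (factor i)"

lemma twice_odd_count_le_partners:
  assumes "i < 3"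
  shows "2 * odd_count i \<le> (\<Sum>C\<in>comps i. partners i C)"
proof -
  let ?O = "{C\<in>comps i. odd (card C)}"
  have "(\<Sum>C\<in>?O. partners i C) = 2 * card ?O"
    using partners_odd_component[OF assms] by simp
  moreover have "(\<Sum>C\<in>?O. partners i C) \<le> (\<Sum>C\<in>comps i. partners i C)"
    using finite_comps by (intro sum_mono2) auto
  ultimately show ?thesis unfolding odd_count_def odd_comps_def comps_def by simp
qed

lemma sum_comps_charge: "(\<Sum>C\<in>comps i. \<Sum>u\<in>C. charge i u) = (\<Sum>u\<in>V. charge i u)"
  unfolding comps_def by (rule sum_components[OF finite_V])

lemma odd_count_le_charge:
  assumes "i < 3"
  shows "2 * odd_count i \<le> (\<Sum>u\<in>V. charge i u)"
proof -
  have "(\<Sum>C\<in>comps i. partners i C) \<le> (\<Sum>C\<in>comps i. \<Sum>u\<in>C. charge i u)"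
    using partners_le_charge[OF assms] by (intro sum_mono) auto
  then show ?thesis using twice_odd_count_le_partners[OF assms] sum_comps_charge by simp
qed

lemma odd_count_less_charge:
  assumes "i < 3" "C \<in> comps i" "partners i C < (\<Sum>u\<in>C. charge i u)"
  shows "2 * odd_count i < (\<Sum>u\<in>V. charge i u)"
proof -
  have "(\<Sum>C\<in>comps i. partners i C) < (\<Sum>C\<in>comps i. \<Sum>u\<in>C. charge i u)"
    using partners_le_charge[OF assms(1)] assms(2,3) finite_comps
    by (intro sum_strict_mono_ex1) auto
  then show ?thesis using twice_odd_count_le_partners[OF assms(1)] sum_comps_charge by simp
qed

lemma sum_deg_E0: "(\<Sum>v\<in>V. deg ends E0 v) = 2 * card E0"
  using handshake[OF finite_V finite_subset_E[OF E0_subset]] E0_subset edge_size edge_ends by blast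

lemma total_charge_le: "(\<Sum>i<3. \<Sum>u\<in>V. charge i u) \<le> 4 * card E0"
proof -
  have "(\<Sum>i<3. \<Sum>u\<in>V. charge i u) = (\<Sum>u\<in>V. \<Sum>i<3. charge i u)" by (rule sum.swap)
  also have "\<dots> \<le> (\<Sum>u\<in>V. 2 * deg ends E0 u)" using sum_charge_le_deg_E0 by (intro sum_mono) auto
  also have "\<dots> = 4 * card E0" using sum_deg_E0 by (simp add: sum_distrib_left[symmetric])
  finally show ?thesis .
qed

lemma total_charge_less:
  assumes "v \<in> V" "(\<Sum>i<3. charge i v) < 2 * deg ends E0 v"
  shows "(\<Sum>i<3. \<Sum>u\<in>V. charge i u) < 4 * card E0"
proof -
  have "(\<Sum>i<3. \<Sum>u\<in>V. charge i u) = (\<Sum>u\<in>V. \<Sum>i<3. charge i u)" by (rule sum.swap)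
  also have "\<dots> < (\<Sum>u\<in>V. 2 * deg ends E0 u)"
    using sum_charge_le_deg_E0 assms finite_V by (intro sum_strict_mono_ex1) auto
  also have "\<dots> = 4 * card E0" using sum_deg_E0 by (simp add: sum_distrib_left[symmetric])
  finally show ?thesis .
qed

lemma odd_counts_le: "(\<Sum>i<3. odd_count i) \<le> 2 * card E0"
proof -
  have "2 * (\<Sum>i<3. odd_count i) = (\<Sum>i<3. 2 * odd_count i)" by (simp add: sum_distrib_left)
  also have "\<dots> \<le> (\<Sum>i<3. \<Sum>u\<in>V. charge i u)" using odd_count_le_charge by (intro sum_mono) auto
  also have "\<dots> \<le> 4 * card E0" by (rule total_charge_le)
  finally show ?thesis by simp
qed

subsection \<open>The equality case\<close>

definition tight :: bool where
  "tight \<longleftrightarrow> (\<Sum>i<3. odd_count i) = 2 * card E0"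

lemma tight_component_not_overcharged:
  assumes "tight" "i < 3" "C \<in> comps i"
  shows "\<not> partners i C < (\<Sum>u\<in>C. charge i u)"
proof
  assume "partners i C < (\<Sum>u\<in>C. charge i u)"
  then have "(\<Sum>i<3. 2 * odd_count i) < (\<Sum>i<3. \<Sum>u\<in>V. charge i u)"
    using odd_count_le_charge odd_count_less_charge assms(2,3) by (intro sum_strict_mono_ex1) auto
  then show False
    using total_charge_le assms(1) unfolding tight_def by (simp add: sum_distrib_left[symmetric])
qed

lemma tight_vertex_not_undercharged:
  assumes "tight" "v \<in> V"
  shows "\<not> (\<Sum>i<3. charge i v) < 2 * deg ends E0 v"
proof
  assume "(\<Sum>i<3. charge i v) < 2 * deg ends E0 v"
  moreover have "(\<Sum>i<3. 2 * odd_count i) \<le> (\<Sum>i<3. \<Sum>u\<in>V. charge i u)"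
    using odd_count_le_charge by (intro sum_mono) auto
  ultimately have "(\<Sum>i<3. 2 * odd_count i) < 4 * card E0"
    using total_charge_less[OF assms(2)] by linarith
  then show False using assms(1) unfolding tight_def by (simp add: sum_distrib_left[symmetric])
qed

lemma E0_end_shared:
  assumes "v \<in> V" "e \<in> E0" "v \<in># ends e" "\<not> shared i v" "i < 3" "j < 3" "j \<noteq> i"
  shows "shared j v"
proof -
  obtain a b where ab: "a < 3" "b < 3" "a \<noteq> b" "factor_edge a v = factor_edge b v"
    using E0_agreement[OF assms(1-3)] by blast
  then have "i \<noteq> a" "i \<noteq> b" using shared_agreement[OF ab] assms(4) by auto
  then have "i = 3 - a - b" using third_index(4)[OF ab(1-3) assms(5)] by blast
  then have "j = a \<or> j = b" using third_index(4)[OF ab(1-3) assms(6)] assms(7) by blast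
  then show ?thesis using shared_agreement[OF ab] by blast
qed

lemma two_E0_edges_triple:
  assumes "x \<in> V" "e1 \<in> E0" "e2 \<in> E0" "e1 \<noteq> e2" "x \<in># ends e1" "x \<in># ends e2"
  shows "triple x"
proof -
  have "{e1, e2} \<subseteq> incident E0 x" using assms unfolding incident_def by auto
  then have "card {e1, e2} \<le> deg ends E0 x"
    using deg_eq_card_incident[OF E0_subset] finite_incident[OF E0_subset] card_mono by metis
  then have "2 \<le> deg ends E0 x" using assms(4) by simp
  then show ?thesis using deg_E0_le_1[OF assms(1)] by fastforce
qed

text \<open>If some factor i is not shared next to a triple vertex v, the two E0-neighbours of v
  are distinct and both shared in another factor j; together with v they overcharge their
  component of G - M_j.\<close>

lemma triple_overcharged_component:
  assumes v: "v \<in> V" and t: "triple v" and i: "i < 3" "\<not> shared_nearby i v"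
  shows "\<exists>j<3. \<exists>C\<in>comps j. partners j C < (\<Sum>u\<in>C. charge j u)"
proof -
  have "card (incident E0 v) = 2"
    using deg_E0_triple[OF v t] deg_eq_card_incident[OF E0_subset] by simp
  then obtain e1 e2 where e12: "incident E0 v = {e1, e2}" "e1 \<noteq> e2" by (auto simp: card_2_iff)
  then have e1: "e1 \<in> E0" "v \<in># ends e1" and e2: "e2 \<in> E0" "v \<in># ends e2"
    unfolding incident_def by blast+
  obtain x where x: "x \<noteq> v" "ends e1 = {#v, x#}" "x \<in> V" by (rule E0_neighbour[OF e1])
  obtain y where y: "y \<noteq> v" "ends e2 = {#v, y#}" "y \<in> V" by (rule E0_neighbour[OF e2])
  have "x \<in># ends e1" "y \<in># ends e2" using x(2) y(2) by simp_all
  then have nx: "\<not> shared i x" and ny: "\<not> shared i y"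
    using i(2) e1 e2 x(1) y(1) unfolding shared_nearby_def by blast+
  have "x \<noteq> y"
  proof
    assume "x = y"
    then have "triple x" using two_E0_edges_triple[OF x(3) e1(1) e2(1) e12(2)] x(2) y(2) by simp
    then show False using triple_shared nx i(1) by blast
  qed
  define j where "j = (if i = 0 then 1 else 0 :: nat)"
  have j: "j < 3" "j \<noteq> i" unfolding j_def by auto
  have "shared j x" using E0_end_shared[OF x(3) e1(1) _ nx i(1) j] x(2) by simp
  moreover have "shared j y" using E0_end_shared[OF y(3) e2(1) _ ny i(1) j] y(2) by simp
  moreover have "shared j v" using triple_shared[OF t j(1)] .
  ultimately have charges: "1 \<le> charge j v" "1 \<le> charge j x" "1 \<le> charge j y"
    using charge_pos by blast+
  define C where "C = component_of V ends (E - factor j) v"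
  have C: "C \<in> comps j" "v \<in> C" unfolding C_def using component_of_comps[OF v] by blast+
  then have "x \<in> C" "y \<in> C" using E0_neighbour_in_comp e1(1) e2(1) x(2) y(2) by blast+
  then have "charge j v + charge j x + charge j y \<le> (\<Sum>u\<in>C. charge j u)"
    using sum_triple_le[OF comps_finite[OF C(1)] C(2)] x(1) y(1) \<open>x \<noteq> y\<close> by auto
  then have "partners j C < (\<Sum>u\<in>C. charge j u)"
    using charges partners_le_2[OF j(1), of C] by linarith
  with j(1) C(1) show ?thesis by blast
qed

lemma tight_not_triple:
  assumes tight: "tight" and v: "v \<in> V"
  shows "\<not> triple v"
proof
  assume t: "triple v"
  have "shared_nearby i v" if i: "i < 3" for i
  proof (rule ccontr)
    assume "\<not> shared_nearby i v"
    then obtain j C where "j < 3" "C \<in> comps j" "partners j C < (\<Sum>u\<in>C. charge j u)"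
      using triple_overcharged_component[OF v t i] by blast
    then show False using tight_component_not_overcharged[OF tight] by blast
  qed
  then have "(\<Sum>i<3. charge i v) = 3" using t unfolding charge_def by (simp add: sum_less_three)
  then show False using tight_vertex_not_undercharged[OF tight v] deg_E0_triple[OF v t] by simp
qed

definition separated :: "nat \<Rightarrow> nat \<Rightarrow> bool" where
  "separated i j \<longleftrightarrow> (\<forall>u\<in>V. \<forall>w\<in>V. u \<noteq> w \<longrightarrow> factor_edge i u = factor_edge j u \<longrightarrow>
     factor_edge i w = factor_edge j w \<longrightarrow> \<not> reach ends (E - factor i) u w)"

lemma tight_separated:
  assumes tight: "tight" and ij: "i < 3" "j < 3" "i \<noteq> j"
  shows "separated i j"
  unfolding separated_def
proof (intro ballI impI notI)
  fix u w assume uw: "u \<in> V" "w \<in> V" "u \<noteq> w"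
    "factor_edge i u = factor_edge j u" "factor_edge i w = factor_edge j w"
    and reach: "reach ends (E - factor i) u w"
  define C where "C = component_of V ends (E - factor i) u"
  have C: "C \<in> comps i" "u \<in> C" "w \<in> C"
    using component_of_comps[OF uw(1)] uw(2) reach unfolding C_def component_of_def by auto
  have "shared i u" "shared i w" using shared_agreement ij uw(4,5) by blast+
  then have two: "2 \<le> charge i u + charge i w" using charge_pos[of i u] charge_pos[of i w] by linarith
  have sum_uw: "charge i u + charge i w \<le> (\<Sum>y\<in>C. charge i y)"
    using sum_pair_le[OF comps_finite[OF C(1)] C(2,3) uw(3)] .
  let ?l = "3 - i - j"
  have "partners i C < (\<Sum>y\<in>C. charge i y)"
  proof (cases "\<exists>z\<in>C. factor_edge i z = factor_edge ?l z")
    case True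
    then obtain z where z: "z \<in> C" "factor_edge i z = factor_edge ?l z" by blast
    have "z \<in> V" using z(1) comps_subset[OF C(1)] by blast
    then have "\<not> triple z" using tight_not_triple[OF tight] by blast
    then have "factor_edge i z \<noteq> factor_edge j z" using triple_agreements[OF ij _ z(2)] by blast
    then have "z \<noteq> u" "z \<noteq> w" using uw(4,5) by auto
    then have "charge i u + charge i w + charge i z \<le> (\<Sum>y\<in>C. charge i y)"
      using sum_triple_le[OF comps_finite[OF C(1)] C(2,3) z(1) uw(3)] by auto
    moreover have "shared i z" unfolding shared_def using z(2) third_index(1,2)[OF ij] by blast
    ultimately show ?thesis using two charge_pos[of i z] partners_le_2[OF ij(1), of C] by linarith
  next
    case False
    then have "partners i C \<le> card {j}"
      unfolding partners_def using third_index(4)[OF ij] by (intro card_mono) auto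
    then show ?thesis using two sum_uw by simp
  qed
  then show False using tight_component_not_overcharged[OF tight ij(1) C(1)] by blast
qed

subsection \<open>The core\<close>

abbreviation Ec :: "'e set" where
  "Ec \<equiv> core_edges E M1 M2 M3"

lemma mult3_eq_sum: "mult3 M1 M2 M3 e = (\<Sum>i<3. if e \<in> factor i then 1 else 0)"
  unfolding mult3_def sum_less_three by (simp add: factor_def)

lemma core_edges_iff: "e \<in> Ec \<longleftrightarrow> e \<in> E \<and> mult3 M1 M2 M3 e \<in> {0, 2, 3}"
  unfolding core_edges_def Ei_def by auto

lemma core_edges_subset: "Ec \<subseteq> E"
  using core_edges_iff by blast

lemma E0_subset_core_edges: "E0 \<subseteq> Ec"
  using Ei_0_eq_E0 unfolding core_edges_def by blast

lemma two_factors_of_mult3: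
  assumes "2 \<le> mult3 M1 M2 M3 e"
  obtains a b where "a < 3" "b < 3" "a \<noteq> b" "e \<in> factor a" "e \<in> factor b"
proof -
  have "e \<in> M1 \<and> e \<in> M2 \<or> e \<in> M1 \<and> e \<in> M3 \<or> e \<in> M2 \<and> e \<in> M3"
    using assms unfolding mult3_def by (simp split: if_splits)
  then show thesis using that[of 0 1] that[of 0 2] that[of 1 2] unfolding factor_def by auto
qed

lemma core_edge_agreement:
  assumes "e \<in> Ec" "w \<in> V" "w \<in># ends e"
  shows "\<exists>a<3. \<exists>b<3. a \<noteq> b \<and> factor_edge a w = factor_edge b w"
proof (cases "e \<in> E0")
  case True
  then show ?thesis using E0_agreement assms(2,3) by blast
next
  case False
  have e: "e \<in> E" "mult3 M1 M2 M3 e \<in> {0, 2, 3}" using core_edges_iff assms(1) by auto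
  have "mult3 M1 M2 M3 e \<noteq> 0"
  proof
    assume "mult3 M1 M2 M3 e = 0"
    then have "e \<in> Ei E M1 M2 M3 0" unfolding Ei_def using e(1) by simp
    then show False using False Ei_0_eq_E0 by simp
  qed
  then have "2 \<le> mult3 M1 M2 M3 e" using e(2) by auto
  then obtain a b where "a < 3" "b < 3" "a \<noteq> b" "e \<in> factor a" "e \<in> factor b"
    by (rule two_factors_of_mult3)
  then show ?thesis using factor_edge_eq[OF assms(2) _ assms(3)] by metis
qed

lemma incident_core_edges:
  assumes w: "w \<in> V" "\<not> triple w"
    and ab: "a < 3" "b < 3" "a \<noteq> b" "factor_edge a w = factor_edge b w"
  shows "\<exists>g\<in>E0. g \<noteq> factor_edge a w \<and> incident Ec w = {factor_edge a w, g}"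
proof -
  let ?l = "3 - a - b"
  have fl: "factor_edge ?l w \<noteq> factor_edge a w" using triple_agreements[OF ab] w(2) by metis
  obtain g where g: "incident E0 w = {g}"
    using deg_E0_agreement[OF w ab] deg_eq_card_incident[OF E0_subset] card_1_singletonE by metis
  then have gE0: "g \<in> E0" unfolding incident_def by blast
  have "incident E w = factor_edges w \<union> incident E0 w"
    using incident_E0[OF w(1)] factor_edge[OF w(1)] factor_edge_in_E[OF w(1)]
    unfolding incident_def factor_edges_def by blast
  then have inc: "incident E w = {factor_edge a w, factor_edge ?l w, g}"
    using factor_edges_agreement[OF ab] g by auto
  have "mult3 M1 M2 M3 (factor_edge a w) = 2"
    unfolding mult3_eq_sum sum_three_indices[OF ab(1-3)] factor_edge_mem[OF w(1)] using ab(4) fl by simp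
  then have "factor_edge a w \<in> Ec" using factor_edge_in_E[OF w(1)] core_edges_iff by simp
  have "mult3 M1 M2 M3 (factor_edge ?l w) = 1"
    unfolding mult3_eq_sum sum_three_indices[OF ab(1-3)] factor_edge_mem[OF w(1)] using ab(4) fl by simp
  then have "factor_edge ?l w \<notin> Ec" using core_edges_iff by simp
  moreover have "g \<in> Ec" using gE0 E0_subset_core_edges by blast
  moreover have "g \<noteq> factor_edge a w" using gE0 E0_not_in_factor factor_edge(1)[OF w(1)] by blast
  ultimately show ?thesis
    using inc gE0 \<open>factor_edge a w \<in> Ec\<close> core_edges_subset unfolding incident_def by auto
qed

lemma core_deg_2:
  assumes no_triple: "\<forall>w\<in>V. \<not> triple w" and v: "v \<in> verts_of ends Ec"
  shows "deg ends Ec v = 2"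
proof -
  obtain e where e: "e \<in> Ec" "v \<in># ends e" using v unfolding verts_of_def by blast
  then have vV: "v \<in> V" using core_edges_subset edge_end_in_V by blast
  obtain a b where ab: "a < 3" "b < 3" "a \<noteq> b" "factor_edge a v = factor_edge b v"
    using core_edge_agreement[OF e(1) vV e(2)] by blast
  then obtain g where "g \<noteq> factor_edge a v" "incident Ec v = {factor_edge a v, g}"
    using incident_core_edges[OF vV _ ab] no_triple vV by blast
  then show ?thesis using deg_eq_card_incident[OF core_edges_subset] by simp
qed

lemma tight_core_cyclic:
  assumes "tight"
  shows "cyclic ends Ec"
proof (rule two_regular_cyclic)
  show "\<forall>e\<in>Ec. size (ends e) = 2" using core_edges_subset edge_size by blast
  show "finite Ec" using finite_subset_E[OF core_edges_subset] .
  show "\<forall>v\<in>verts_of ends Ec. deg ends Ec v = 2"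
    using core_deg_2 tight_not_triple[OF assms] by blast
qed

lemma path_vertex_in_V:
  assumes "is_path ends F n vs es" "F \<subseteq> E" "t \<le> n" "0 < n"
  shows "vs ! t \<in> V"
proof (cases "t = n")
  case True
  then have "vs ! t \<in># ends (es ! (n - 1))" "es ! (n - 1) \<in> E"
    using assms unfolding is_path_def by (auto simp: Suc_diff_1)
  then show ?thesis using edge_end_in_V by blast
next
  case False
  then have "vs ! t \<in># ends (es ! t)" "es ! t \<in> E" using assms unfolding is_path_def by auto
  then show ?thesis using edge_end_in_V by blast
qed

lemma path_adjacent_factor_edges:
  assumes P: "is_path ends F n vs es" "F \<subseteq> E" and t: "Suc t < n"
    and "es ! t \<in> factor i" "es ! Suc t \<in> factor i"
  shows False
proof -
  have "vs ! Suc t \<in> V" using path_vertex_in_V[OF P] t by simp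
  moreover have "vs ! Suc t \<in># ends (es ! t)" "vs ! Suc t \<in># ends (es ! Suc t)"
    using P(1) t unfolding is_path_def by auto
  ultimately have "es ! t = es ! Suc t" using factor_edge_eq assms(4,5) by metis
  then show False using path_adjacent_edges_distinct[OF P(1) t] by blast
qed

text \<open>Two edges of M_i \<inter> M_j on a path are separated by an edge of M_i that is adjacent to
  neither of them: the path between them would otherwise join their ends inside G - M_i.\<close>

lemma double_edges_gap:
  assumes P: "is_path ends F n vs es" "F \<subseteq> E" and sep: "separated i j"
    and pq: "Suc p < q" "q < n"
    and p: "es ! p \<in> factor i" "es ! p \<in> factor j" and q: "es ! q \<in> factor i" "es ! q \<in> factor j"
  obtains r where "p + 2 \<le> r" "r + 2 \<le> q" "es ! r \<in> factor i"
proof -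
  let ?x = "vs ! Suc p" and ?y = "vs ! q"
  have V: "?x \<in> V" "?y \<in> V" using path_vertex_in_V[OF P] pq by auto
  have "?x \<noteq> ?y" using P(1) pq unfolding is_path_def by (simp add: nth_eq_iff_index_eq)
  moreover have "?x \<in># ends (es ! p)" "?y \<in># ends (es ! q)" using P(1) pq unfolding is_path_def by auto
  then have "factor_edge i ?x = factor_edge j ?x" "factor_edge i ?y = factor_edge j ?y"
    using factor_edge_eq V p q by metis+
  ultimately have "\<not> reach ends (E - factor i) ?x ?y" using sep V unfolding separated_def by blast
  then obtain r where r: "Suc p \<le> r" "r < q" "es ! r \<notin> E - factor i"
    using path_reach[OF P(1), of "Suc p" q "E - factor i"] pq by auto
  have "r < n" using r(2) pq(2) by simp
  then have "es ! r \<in> E" using P unfolding is_path_def by auto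
  then have "es ! r \<in> factor i" using r(3) by blast
  moreover have "r \<noteq> Suc p" using path_adjacent_factor_edges[OF P, of p i] p(1) pq \<open>es ! r \<in> factor i\<close> by auto
  moreover have "Suc r \<noteq> q" using path_adjacent_factor_edges[OF P, of r i] q(1) pq \<open>es ! r \<in> factor i\<close> by auto
  ultimately show thesis using that[of r] r(1,2) by linarith
qed

lemma double_edges_far_apart:
  assumes P: "is_path ends F n vs es" "F \<subseteq> E" and sep: "separated i j" "separated j i"
    and pq: "p < q" "q < n" "q \<le> p + 4"
    and p: "es ! p \<in> factor i" "es ! p \<in> factor j" and q: "es ! q \<in> factor i" "es ! q \<in> factor j"
  shows False
proof (cases "q = Suc p")
  case True
  then show False using path_adjacent_factor_edges[OF P, of p i] p q pq by simp
next
  case False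
  then have "Suc p < q" using pq by simp
  obtain r where r: "p + 2 \<le> r" "r + 2 \<le> q" "es ! r \<in> factor i"
    using double_edges_gap[OF P sep(1) \<open>Suc p < q\<close> pq(2) p q] .
  obtain r' where r': "p + 2 \<le> r'" "r' + 2 \<le> q" "es ! r' \<in> factor j"
    using double_edges_gap[OF P sep(2) \<open>Suc p < q\<close> pq(2) p(2,1) q(2,1)] .
  have "r = p + 2" "r' = p + 2" "p + 2 < n" using r(1,2) r'(1,2) pq by linarith+
  then have mid: "es ! (p + 2) \<in> factor i" "es ! (p + 2) \<in> factor j" "p + 2 < n"
    using r(3) r'(3) by simp_all
  obtain r'' where "p + 2 \<le> r''" "r'' + 2 \<le> p + 2"
    using double_edges_gap[OF P sep(1) _ mid(3) p mid(1,2)] by simp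
  then show False by simp
qed

lemma tight_path_double_edges:
  assumes tight: "tight" and P: "is_path ends Ec 5 vs es"
    and e: "e1 \<in> set es" "e2 \<in> set es" "e1 \<noteq> e2"
    and ij: "i < 3" "j < 3" "i \<noteq> j"
    and e1: "e1 \<in> factor i" "e1 \<in> factor j" and e2: "e2 \<in> factor i" "e2 \<in> factor j"
  shows False
proof -
  have "length es = 5" using P unfolding is_path_def by simp
  then obtain p q where pq: "p < 5" "q < 5" "es ! p = e1" "es ! q = e2"
    using e(1,2) by (metis in_set_conv_nth)
  have sep: "separated i j" "separated j i" using tight_separated[OF tight] ij by auto
  have "p < q \<or> q < p" using pq e(3) by (metis nat_neq_iff)
  then show False
  proof
    assume "p < q"
    then show False
      using double_edges_far_apart[OF P core_edges_subset sep \<open>p < q\<close> pq(2)] pq e1 e2 by simp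
  next
    assume "q < p"
    then show False
      using double_edges_far_apart[OF P core_edges_subset sep \<open>q < p\<close> pq(1)] pq e1 e2 by simp
  qed
qed

lemma tight_petersen_core:
  assumes "tight"
  shows "petersen_core E ends M1 M2 M3"
  unfolding petersen_core_def Let_def
proof (intro conjI allI impI notI)
  show "cyclic ends Ec" using tight_core_cyclic[OF assms] .
next
  fix vs es
  assume P: "is_path ends Ec 5 vs es"
    and "\<exists>e1\<in>set es. \<exists>e2\<in>set es. e1 \<noteq> e2 \<and>
           (\<exists>(A, B)\<in>{(M1, M2), (M1, M3), (M2, M3)}. e1 \<in> A \<inter> B \<and> e2 \<in> A \<inter> B)"
  then obtain e1 e2 A B where e: "e1 \<in> set es" "e2 \<in> set es" "e1 \<noteq> e2"
    and AB: "(A, B) \<in> {(M1, M2), (M1, M3), (M2, M3)}" "e1 \<in> A \<inter> B" "e2 \<in> A \<inter> B"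
    by blast
  have "\<exists>i<3. \<exists>j<3. i \<noteq> j \<and> A = factor i \<and> B = factor j"
    using AB(1) unfolding ex_less_three factor_def by auto
  then show False using tight_path_double_edges[OF assms P e] AB(2,3) by blast
qed

lemma odd_comps_sum:
  "odd_comps V E ends M1 + odd_comps V E ends M2 + odd_comps V E ends M3 = (\<Sum>i<3. odd_count i)"
  unfolding odd_count_def sum_less_three by (simp add: factor_def)

end

theorem mainTheorem2:
  fixes V :: "'v set" and E :: "'e set" and ends :: "'e \<Rightarrow> 'v multiset"
    and M1 M2 M3 :: "'e set" and k :: nat
  assumes "cubic V E ends" and "bridgeless E ends"
    and "one_factor V E ends M1" and "one_factor V E ends M2" and "one_factor V E ends M3"
    and "k > 0" and "card (Ei E M1 M2 M3 0) = k"
  shows "odd_comps V E ends M1 + odd_comps V E ends M2 + odd_comps V E ends M3 \<le> 2 * k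
         \<and> (odd_comps V E ends M1 + odd_comps V E ends M2 + odd_comps V E ends M3 = 2 * k
              \<longrightarrow> petersen_core E ends M1 M2 M3)"
proof -
  interpret three_factors V E ends M1 M2 M3
    using assms(1-5) by unfold_locales
  have "k = card E0" using assms(7) Ei_0_eq_E0 by simp
  then show ?thesis
    using odd_counts_le tight_petersen_core unfolding tight_def odd_comps_sum by simp
qed

end
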